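(* Let $\phi\colon\Sigma'\to\Sigma$ be a harmonic map of weighted metric graphs with boundary. Define $\phi^*f=f\circ\phi$ for $f\in\mathcal A^{0,0}(\Sigma,\partial\Sigma)$, $\phi^*(f_e\,d't_e)=(f_{\phi(e')}\circ\phi\;d_{e'}(\phi)\,d't_{e'})$, $\phi^*(f_e\,d''t_e)=(f_{\phi(e')}\circ\phi\;d_{e'}(\phi)\,d''t_{e'})$, and $\phi^*(f_e\,d't_ed''t_e)=(f_{\phi(e')}\circ\phi\;d_{e'}(\phi)^2\,d't_{e'}d''t_{e'})$, where the coefficient on $e'$ is taken to be $0$ if $\phi(e')$ is a vertex. Then $\phi^*$ maps $\mathcal A^{p,q}(\Sigma,\partial\Sigma)$ into $\mathcal A^{p,q}(\Sigma',\partial\Sigma')$ and is a homomorphism of bigraded differential algebras $\mathcal A^{\bullet,\bullet}(\Sigma,\partial\Sigma)\to\mathcal A^{\bullet,\bullet}(\Sigma',\partial\Sigma')$.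
   Context: Weighted metric graph with boundary $(\Sigma,\partial\Sigma)$: finite multigraph without loop edges, oriented edges $e$ with length $\ell(e)>0$, parametrization $t_e\colon[0,\ell(e)]\to e$ ($t_e(0)=e^-$, $t_{\bar e}(x)=t_e(\ell(e)-x)$), weight $w(e)=w(\bar e)\in\mathbb Z_{>0}$, boundary $\partial\Sigma\subset V(\Sigma)$; subdivisions allowed. Pair smoothness at a valency-2 vertex $v$ with outgoing $e_1,e_2$: $(f_1,f_2)$ smooth at $v$ iff $w(e_1)^n\frac{d^nf_1}{dt_{e_1}^n}(v)=(-1)^nw(e_2)^n\frac{d^nf_2}{dt_{e_2}^n}(v)$ for all $n\ge0$. $\mathcal A^{0,0}$: continuous $f$, smooth on edges, at interior $v$: constant near $v$ (valency 1), $(f|_{e_1},f|_{e_2})$ smooth at $v$ (valency 2), $\sum_{e^-=v}w(e)\frac{df}{dt_e}(v)=0$ (valency $\ge3$). $\mathcal A^{1,0}$/$\mathcal A^{0,1}$: $(f_e\,d't_e)$/$(f_e\,d''t_e)$ with $f_{\bar e}=-f_e$, zero near interior valency-1 vertices, $(w(e_1)f_{e_1},-w(e_2)f_{e_2})$ smooth at interior valency-2 vertices, $\sum_{e^-=v}w(e)f_e(v)=0$ at interior valency $\ge3$. $\mathcal A^{1,1}$: $(f_e\,d't_ed''t_e)$, $f_{\bar e}=f_e$, zero near interior valency-1 vertices, $(w(e_1)^2f_{e_1},w(e_2)^2f_{e_2})$ smooth at interior valency-2 vertices. $d',d''$: $d'f=(\frac{df}{dt_e}d't_e)$, $d''f=(\frac{df}{dt_e}d''t_e)$,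 $d''(f_e\,d't_e)=(-\frac{df_e}{dt_e}d't_ed''t_e)$, $d'(f_e\,d''t_e)=(\frac{df_e}{dt_e}d't_ed''t_e)$; wedge product $(f_e\,d't_e)\wedge(g_e\,d''t_e)=(f_eg_e\,d't_ed''t_e)$, alternating. Piecewise linear map: continuous, after subdivision vertices→vertices, edges→edges homeomorphically or →vertices, boundary condition (if $\phi(v')\in\partial\Sigma$ and $\phi$ nonconstant near $v'$ then $v'\in\partial\Sigma'$), $\phi\circ t_{e'}(x)=t_e(d_{e'}(\phi)x)$ with $d_{e'}(\phi)=\ell(e)/\ell(e')$. Harmonic: at each $v'\notin\partial\Sigma'$, $\sum_{e'^-=v',e'\mapsto e}\frac{w(e')}{w(e)}d_{e'}(\phi)$ independent of edge $e$ at $\phi(v')$. *)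

theory Defs
  imports "HOL-Analysis.Analysis"
begin

text \<open>A weighted metric graph with boundary, given combinatorially:
  vertices, oriented edges (the edge set is closed under reversal),
  the initial vertex e^- of an oriented edge, the reversal e -> e-bar,
  lengths, weights and the boundary vertex set.  A point t_e(x) of the edge e
  is described by the parameter x in [0, len e].\<close>

record ('v, 'e) wmgraph =
  verts :: "'v set"
  edges :: "'e set"
  src   :: "'e \<Rightarrow> 'v"
  rev   :: "'e \<Rightarrow> 'e"
  len   :: "'e \<Rightarrow> real"
  wt    :: "'e \<Rightarrow> nat"
  bdry  :: "'v set"

definition tgt :: "('v, 'e, 'z) wmgraph_scheme \<Rightarrow> 'e \<Rightarrow> 'v" where
  "tgt G e = src G (rev G e)"

definition is_wmgraph :: "('v, 'e, 'z) wmgraph_scheme \<Rightarrow> bool" where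
  "is_wmgraph G \<longleftrightarrow>
     finite (verts G) \<and> finite (edges G) \<and> bdry G \<subseteq> verts G \<and>
     (\<forall>e\<in>edges G.
        src G e \<in> verts G \<and> rev G e \<in> edges G \<and> rev G (rev G e) = e \<and>
        rev G e \<noteq> e \<and> tgt G e \<noteq> src G e \<and>
        len G e > 0 \<and> len G (rev G e) = len G e \<and>
        wt G e > 0 \<and> wt G (rev G e) = wt G e)"

definition out_edges :: "('v, 'e, 'z) wmgraph_scheme \<Rightarrow> 'v \<Rightarrow> 'e set" where
  "out_edges G v = {e \<in> edges G. src G e = v}"

definition valency :: "('v, 'e, 'z) wmgraph_scheme \<Rightarrow> 'v \<Rightarrow> nat" where
  "valency G v = card (out_edges G v)"

definition interior_verts :: "('v, 'e, 'z) wmgraph_scheme \<Rightarrow> 'v set" where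
  "interior_verts G = verts G - bdry G"

text \<open>Coefficient functions on an edge e are represented by functions
  real => real that are C-infinity on all of the real line; only their values
  on [0, len e] matter (a smooth function on a closed interval always admits
  a smooth extension).  Derivatives at e^- are derivatives at x = 0.\<close>

definition smooth_fun :: "(real \<Rightarrow> real) \<Rightarrow> bool" where
  "smooth_fun g \<longleftrightarrow> (\<forall>n x. (deriv ^^ n) g differentiable (at x))"

definition nderiv :: "nat \<Rightarrow> (real \<Rightarrow> real) \<Rightarrow> real \<Rightarrow> real" where
  "nderiv n g = (deriv ^^ n) g"

text \<open>Smoothness of a pair (f1, f2) at a valency-2 vertex with outgoing edges
  e1, e2 of weights w1, w2.\<close>

definition pair_smooth :: "nat \<Rightarrow> (real \<Rightarrow> real) \<Rightarrow> nat \<Rightarrow> (real \<Rightarrow> real) \<Rightarrow> bool" where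
  "pair_smooth w1 f1 w2 f2 \<longleftrightarrow>
     (\<forall>n. real w1 ^ n * nderiv n f1 0 = (-1) ^ n * real w2 ^ n * nderiv n f2 0)"

definition zero_near :: "real \<Rightarrow> (real \<Rightarrow> real) \<Rightarrow> bool" where
  "zero_near l g \<longleftrightarrow> (\<exists>\<epsilon>>0. \<forall>x\<in>{0..min \<epsilon> l}. g x = 0)"

definition const_near :: "real \<Rightarrow> (real \<Rightarrow> real) \<Rightarrow> bool" where
  "const_near l g \<longleftrightarrow> (\<exists>\<epsilon>>0. \<forall>x\<in>{0..min \<epsilon> l}. g x = g 0)"

type_synonym 'e coeffs = "'e \<Rightarrow> real \<Rightarrow> real"

text \<open>A (0,0)-form is a function on the metric graph: values at vertices
  together with the functions f o t_e on the edges.\<close>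

type_synonym ('v, 'e) form0 = "('v \<Rightarrow> real) \<times> 'e coeffs"

definition A00 :: "('v, 'e, 'z) wmgraph_scheme \<Rightarrow> ('v, 'e) form0 set" where
  "A00 G = {(fv, fe).
     (\<forall>e\<in>edges G. smooth_fun (fe e) \<and> fe e 0 = fv (src G e) \<and>
        (\<forall>x\<in>{0..len G e}. fe (rev G e) x = fe e (len G e - x))) \<and>
     (\<forall>v\<in>interior_verts G.
        (valency G v = 1 \<longrightarrow> (\<forall>e\<in>out_edges G v. const_near (len G e) (fe e))) \<and>
        (valency G v = 2 \<longrightarrow> (\<forall>e1\<in>out_edges G v. \<forall>e2\<in>out_edges G v. e1 \<noteq> e2 \<longrightarrow>
            pair_smooth (wt G e1) (fe e1) (wt G e2) (fe e2))) \<and>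
        (valency G v \<ge> 3 \<longrightarrow> (\<Sum>e\<in>out_edges G v. real (wt G e) * deriv (fe e) 0) = 0))}"

text \<open>Forms of type (1,0), resp. (0,1), are given by their coefficient family
  (f_e) in (f_e d't_e), resp. (f_e d''t_e).\<close>

definition A1_coeffs :: "('v, 'e, 'z) wmgraph_scheme \<Rightarrow> 'e coeffs set" where
  "A1_coeffs G = {f.
     (\<forall>e\<in>edges G. smooth_fun (f e) \<and>
        (\<forall>x\<in>{0..len G e}. f (rev G e) x = - f e (len G e - x))) \<and>
     (\<forall>v\<in>interior_verts G.
        (valency G v = 1 \<longrightarrow> (\<forall>e\<in>out_edges G v. zero_near (len G e) (f e))) \<and>
        (valency G v = 2 \<longrightarrow> (\<forall>e1\<in>out_edges G v. \<forall>e2\<in>out_edges G v. e1 \<noteq> e2 \<longrightarrow>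
            pair_smooth (wt G e1) (\<lambda>x. real (wt G e1) * f e1 x)
                        (wt G e2) (\<lambda>x. - real (wt G e2) * f e2 x))) \<and>
        (valency G v \<ge> 3 \<longrightarrow> (\<Sum>e\<in>out_edges G v. real (wt G e) * f e 0) = 0))}"

definition A10 :: "('v, 'e, 'z) wmgraph_scheme \<Rightarrow> 'e coeffs set" where
  "A10 G = A1_coeffs G"

definition A01 :: "('v, 'e, 'z) wmgraph_scheme \<Rightarrow> 'e coeffs set" where
  "A01 G = A1_coeffs G"

text \<open>Forms of type (1,1): coefficient family (f_e) in (f_e d't_e d''t_e).\<close>

definition A11 :: "('v, 'e, 'z) wmgraph_scheme \<Rightarrow> 'e coeffs set" where
  "A11 G = {f.
     (\<forall>e\<in>edges G. smooth_fun (f e) \<and>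
        (\<forall>x\<in>{0..len G e}. f (rev G e) x = f e (len G e - x))) \<and>
     (\<forall>v\<in>interior_verts G.
        (valency G v = 1 \<longrightarrow> (\<forall>e\<in>out_edges G v. zero_near (len G e) (f e))) \<and>
        (valency G v = 2 \<longrightarrow> (\<forall>e1\<in>out_edges G v. \<forall>e2\<in>out_edges G v. e1 \<noteq> e2 \<longrightarrow>
            pair_smooth (wt G e1) (\<lambda>x. real (wt G e1) ^ 2 * f e1 x)
                        (wt G e2) (\<lambda>x. real (wt G e2) ^ 2 * f e2 x))))}"

definition d'_00 :: "('v, 'e) form0 \<Rightarrow> 'e coeffs" where
  "d'_00 F = (\<lambda>e x. deriv (snd F e) x)"

definition d''_00 :: "('v, 'e) form0 \<Rightarrow> 'e coeffs" where
  "d''_00 F = (\<lambda>e x. deriv (snd F e) x)"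

text \<open>d''(f_e d't_e) = (- df_e/dt_e d't_e d''t_e)\<close>
definition d''_10 :: "'e coeffs \<Rightarrow> 'e coeffs" where
  "d''_10 f = (\<lambda>e x. - deriv (f e) x)"

text \<open>d'(f_e d''t_e) = (df_e/dt_e d't_e d''t_e)\<close>
definition d'_01 :: "'e coeffs \<Rightarrow> 'e coeffs" where
  "d'_01 f = (\<lambda>e x. deriv (f e) x)"

definition mult00 :: "('v, 'e) form0 \<Rightarrow> ('v, 'e) form0 \<Rightarrow> ('v, 'e) form0" where
  "mult00 F H = (\<lambda>v. fst F v * fst H v, \<lambda>e x. snd F e x * snd H e x)"

definition mult0 :: "('v, 'e) form0 \<Rightarrow> 'e coeffs \<Rightarrow> 'e coeffs" where
  "mult0 F a = (\<lambda>e x. snd F e x * a e x)"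

text \<open>(f_e d't_e) wedge (g_e d''t_e) = (f_e g_e d't_e d''t_e)\<close>
definition wedge_10_01 :: "'e coeffs \<Rightarrow> 'e coeffs \<Rightarrow> 'e coeffs" where
  "wedge_10_01 a b = (\<lambda>e x. a e x * b e x)"

definition lin0 :: "real \<Rightarrow> ('v, 'e) form0 \<Rightarrow> real \<Rightarrow> ('v, 'e) form0 \<Rightarrow> ('v, 'e) form0" where
  "lin0 a F b H = (\<lambda>v. a * fst F v + b * fst H v, \<lambda>e x. a * snd F e x + b * snd H e x)"

definition lin1 :: "real \<Rightarrow> 'e coeffs \<Rightarrow> real \<Rightarrow> 'e coeffs \<Rightarrow> 'e coeffs" where
  "lin1 a f b g = (\<lambda>e x. a * f e x + b * g e x)"

definition one0 :: "('v, 'e) form0" where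
  "one0 = (\<lambda>v. 1, \<lambda>e x. 1)"

text \<open>Equality of forms on a graph (only values on the graph matter).\<close>

definition eq_coeffs :: "('v, 'e, 'z) wmgraph_scheme \<Rightarrow> 'e coeffs \<Rightarrow> 'e coeffs \<Rightarrow> bool" where
  "eq_coeffs G f g \<longleftrightarrow> (\<forall>e\<in>edges G. \<forall>x\<in>{0..len G e}. f e x = g e x)"

definition eq_form0 :: "('v, 'e, 'z) wmgraph_scheme \<Rightarrow> ('v, 'e) form0 \<Rightarrow> ('v, 'e) form0 \<Rightarrow> bool" where
  "eq_form0 G F H \<longleftrightarrow> (\<forall>v\<in>verts G. fst F v = fst H v) \<and> eq_coeffs G (snd F) (snd H)"

text \<open>A piecewise linear map phi : G' -> G, with G, G' already subdivided so
  that phi maps vertices to vertices (phiV) and every edge e' either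
  homeomorphically onto an edge e (phiE e' = Some e), via
  phi(t_e'(x)) = t_e(d_e'(phi) x) with d_e'(phi) = len e / len e',
  or onto a vertex (phiE e' = None).\<close>

definition pl_map ::
  "('v2, 'e2, 'z2) wmgraph_scheme \<Rightarrow> ('v, 'e, 'z) wmgraph_scheme \<Rightarrow>
   ('v2 \<Rightarrow> 'v) \<Rightarrow> ('e2 \<Rightarrow> 'e option) \<Rightarrow> bool" where
  "pl_map G' G phiV phiE \<longleftrightarrow>
     (\<forall>v'\<in>verts G'. phiV v' \<in> verts G) \<and>
     (\<forall>e'\<in>edges G'.
        (case phiE e' of
           None \<Rightarrow> phiV (src G' e') = phiV (tgt G' e') \<and> phiE (rev G' e') = None
         | Some e \<Rightarrow> e \<in> edges G \<and> src G e = phiV (src G' e') \<and>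
                     phiE (rev G' e') = Some (rev G e))) \<and>
     (\<forall>v'\<in>verts G'. phiV v' \<in> bdry G \<and>
        (\<exists>e'\<in>out_edges G' v'. phiE e' \<noteq> None) \<longrightarrow> v' \<in> bdry G')"

definition dfac ::
  "('v2, 'e2, 'z2) wmgraph_scheme \<Rightarrow> ('v, 'e, 'z) wmgraph_scheme \<Rightarrow>
   ('e2 \<Rightarrow> 'e option) \<Rightarrow> 'e2 \<Rightarrow> real" where
  "dfac G' G phiE e' = (case phiE e' of None \<Rightarrow> 0 | Some e \<Rightarrow> len G e / len G' e')"

definition harmonic_map ::
  "('v2, 'e2, 'z2) wmgraph_scheme \<Rightarrow> ('v, 'e, 'z) wmgraph_scheme \<Rightarrow>
   ('v2 \<Rightarrow> 'v) \<Rightarrow> ('e2 \<Rightarrow> 'e option) \<Rightarrow> bool" where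
  "harmonic_map G' G phiV phiE \<longleftrightarrow>
     pl_map G' G phiV phiE \<and>
     (\<forall>v'\<in>verts G' - bdry G'. \<exists>c. \<forall>e\<in>out_edges G (phiV v').
        (\<Sum>e'\<in>{e'\<in>out_edges G' v'. phiE e' = Some e}.
            real (wt G' e') / real (wt G e) * dfac G' G phiE e') = c)"

definition pull0 ::
  "('v2, 'e2, 'z2) wmgraph_scheme \<Rightarrow> ('v, 'e, 'z) wmgraph_scheme \<Rightarrow>
   ('v2 \<Rightarrow> 'v) \<Rightarrow> ('e2 \<Rightarrow> 'e option) \<Rightarrow> ('v, 'e) form0 \<Rightarrow> ('v2, 'e2) form0" where
  "pull0 G' G phiV phiE F =
     (\<lambda>v'. fst F (phiV v'),
      \<lambda>e' x. (case phiE e' of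
                None \<Rightarrow> fst F (phiV (src G' e'))
              | Some e \<Rightarrow> snd F e (dfac G' G phiE e' * x)))"

definition pull1 ::
  "('v2, 'e2, 'z2) wmgraph_scheme \<Rightarrow> ('v, 'e, 'z) wmgraph_scheme \<Rightarrow>
   ('e2 \<Rightarrow> 'e option) \<Rightarrow> 'e coeffs \<Rightarrow> 'e2 coeffs" where
  "pull1 G' G phiE f =
     (\<lambda>e' x. (case phiE e' of
                None \<Rightarrow> 0
              | Some e \<Rightarrow> f e (dfac G' G phiE e' * x) * dfac G' G phiE e'))"

definition pull2 ::
  "('v2, 'e2, 'z2) wmgraph_scheme \<Rightarrow> ('v, 'e, 'z) wmgraph_scheme \<Rightarrow>
   ('e2 \<Rightarrow> 'e option) \<Rightarrow> 'e coeffs \<Rightarrow> 'e2 coeffs" where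
  "pull2 G' G phiE f =
     (\<lambda>e' x. (case phiE e' of
                None \<Rightarrow> 0
              | Some e \<Rightarrow> f e (dfac G' G phiE e' * x) * dfac G' G phiE e' ^ 2))"

end

theory Submission
  imports Defs
begin

text \<open>On an edge e' mapped onto an edge e, the pullback of a form of degree p is the rescaling
  x \<mapsto> d x of the edge parameter multiplied by d^p, where d = d_e'(phi); on a contracted edge it is
  constant (p = 0) or zero.  Rescaling preserves smoothness, the symmetry under reversal of the
  edge and local constancy or vanishing, and it commutes with products and, by the chain rule,
  with d' and d''.

  The vertex conditions at an interior vertex v' come from harmonicity: as soon as some edge at
  v' is not contracted, phi maps the star of v' onto the star of the interior vertex phi(v'), and
  the sum of w(e') d_e'(phi) over the edges e' at v' mapped onto e equals m w(e) for a local
  degree m > 0.  Hence a balancing sum at v' is m times the one at phi(v').  At a vertex of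
  valency 2 either both edges are contracted or mapped onto an interior leaf edge, where
  everything is locally constant, or the two edges are mapped onto the two edges at phi(v') with
  w(e_i') d_i = m w(e_i), which rescales the smoothness condition at phi(v') into the one at v'.\<close>

section \<open>Smooth functions on an interval\<close>

lemma smooth_fun_has_deriv:
  "smooth_fun f \<Longrightarrow> ((deriv ^^ n) f has_real_derivative deriv ((deriv ^^ n) f) x) (at x)"
  unfolding smooth_fun_def using DERIV_deriv_iff_real_differentiable by blast

lemma higher_deriv_rescale:
  assumes "smooth_fun f"
  shows "(deriv ^^ n) (\<lambda>x. k * f (d * x)) = (\<lambda>x. k * d ^ n * (deriv ^^ n) f (d * x))"
proof (induction n)
  case 0
  then show ?case by simp
next
  case (Suc n)
  have "((\<lambda>x. (deriv ^^ n) f (d * x)) has_real_derivative deriv ((deriv ^^ n) f) (d * y) * d) (at y)"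
    for y
    by (rule DERIV_chain2[OF smooth_fun_has_deriv[OF assms]]) (auto intro!: derivative_eq_intros)
  then have "((\<lambda>x. k * d ^ n * (deriv ^^ n) f (d * x)) has_real_derivative
      k * d ^ Suc n * (deriv ^^ Suc n) f (d * y)) (at y)" for y
    using DERIV_cmult[where c = "k * d ^ n"] by (fastforce simp: algebra_simps)
  moreover have "(deriv ^^ Suc n) (\<lambda>x. k * f (d * x)) = deriv (\<lambda>x. k * d ^ n * (deriv ^^ n) f (d * x))"
    using Suc.IH by simp
  ultimately show ?case
    by (simp add: DERIV_imp_deriv fun_eq_iff)
qed

lemma smooth_fun_rescale:
  assumes "smooth_fun f"
  shows "smooth_fun (\<lambda>x. k * f (d * x))"
  unfolding smooth_fun_def higher_deriv_rescale[OF assms]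
proof (intro allI)
  fix n x
  have "((\<lambda>x. (deriv ^^ n) f (d * x)) has_real_derivative deriv ((deriv ^^ n) f) (d * x) * d) (at x)"
    by (rule DERIV_chain2[OF smooth_fun_has_deriv[OF assms]]) (auto intro!: derivative_eq_intros)
  then show "(\<lambda>x. k * d ^ n * (deriv ^^ n) f (d * x)) differentiable at x"
    using DERIV_cmult real_differentiable_def by blast
qed

lemma smooth_fun_cmult: "smooth_fun f \<Longrightarrow> smooth_fun (\<lambda>x. k * f x)"
  using smooth_fun_rescale[of f k 1] by simp

lemma smooth_fun_const: "smooth_fun (\<lambda>_. c)"
proof -
  have "(deriv ^^ n) (\<lambda>_. c) = (\<lambda>_. if n = 0 then c else 0)" for n
    by (induction n) auto
  then show ?thesis
    by (simp add: smooth_fun_def)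
qed

lemma nderiv_rescale:
  "smooth_fun f \<Longrightarrow> nderiv n (\<lambda>x. k * f (d * x)) y = k * d ^ n * nderiv n f (d * y)"
  by (simp add: nderiv_def higher_deriv_rescale)

lemma nderiv_cmult: "smooth_fun f \<Longrightarrow> nderiv n (\<lambda>x. k * f x) y = k * nderiv n f y"
  using nderiv_rescale[of f n k 1 y] by simp

lemma deriv_rescale: "smooth_fun f \<Longrightarrow> deriv (\<lambda>x. k * f (d * x)) y = k * d * deriv f (d * y)"
  using higher_deriv_rescale[of f "Suc 0" k d] by (simp add: fun_eq_iff)

lemma higher_deriv_Suc_eq_0_on_open:
  assumes "open S" "\<forall>y\<in>S. f y = c" "x \<in> S"
  shows "(deriv ^^ Suc n) f x = 0"
  using assms(3)
proof (induction n arbitrary: x)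
  case 0
  have "deriv f x = deriv (\<lambda>_. c) x"
    using assms(1,2) 0 by (intro deriv_cong_ev) (auto simp: eventually_nhds)
  then show ?case by simp
next
  case (Suc n)
  have "deriv ((deriv ^^ Suc n) f) x = deriv (\<lambda>_. 0) x"
    using assms(1) Suc by (intro deriv_cong_ev) (auto simp: eventually_nhds)
  then show ?case by simp
qed

lemma continuous_eq_0_if_right_vanishing:
  fixes g :: "real \<Rightarrow> real"
  assumes "isCont g 0" "\<delta> > 0" "\<forall>y\<in>{0<..<\<delta>}. g y = 0"
  shows "g 0 = 0"
proof -
  have "(g \<longlongrightarrow> g 0) (at_right 0)"
    using assms(1) by (simp add: isCont_def filterlim_at_split)
  moreover have "(g \<longlongrightarrow> 0) (at_right 0)"
    using eventually_at_right_real[OF assms(2)] assms(3)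
    by (auto intro: Lim_transform_eventually[OF tendsto_const] elim!: eventually_mono)
  ultimately show ?thesis
    using tendsto_unique[OF trivial_limit_at_right_real] by blast
qed

lemma nderiv_Suc_eq_0_if_const_near:
  assumes "smooth_fun f" "const_near l f" "l > 0"
  shows "nderiv (Suc n) f 0 = 0"
proof -
  obtain \<epsilon> where "\<epsilon> > 0" and const: "\<forall>x\<in>{0..min \<epsilon> l}. f x = f 0"
    using assms(2) unfolding const_near_def by blast
  define \<delta> where "\<delta> = min \<epsilon> l"
  have "{0<..<\<delta>} \<subseteq> {0..min \<epsilon> l}"
    by (auto simp: \<delta>_def)
  then have "\<forall>y\<in>{0<..<\<delta>}. f y = f 0"
    using const by blast
  then have "\<forall>y\<in>{0<..<\<delta>}. (deriv ^^ Suc n) f y = 0"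
    using higher_deriv_Suc_eq_0_on_open[OF open_greaterThanLessThan] by blast
  moreover have "\<delta> > 0"
    using \<open>\<epsilon> > 0\<close> assms(3) by (simp add: \<delta>_def)
  moreover have "isCont ((deriv ^^ Suc n) f) 0"
    using assms(1) unfolding smooth_fun_def by (blast intro: differentiable_imp_continuous_within)
  ultimately show ?thesis
    unfolding nderiv_def by (intro continuous_eq_0_if_right_vanishing)
qed

lemma const_near_if_zero_near: "zero_near l f \<Longrightarrow> l \<ge> 0 \<Longrightarrow> const_near l f \<and> f 0 = 0"
  unfolding zero_near_def const_near_def by force

lemma nderiv_eq_0_if_zero_near:
  assumes "smooth_fun f" "zero_near l f" "l > 0"
  shows "nderiv n f 0 = 0"
proof (cases n)
  case 0
  then show ?thesis
    using const_near_if_zero_near[OF assms(2)] assms(3) by (simp add: nderiv_def)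
next
  case (Suc m)
  then show ?thesis
    using const_near_if_zero_near[OF assms(2)] nderiv_Suc_eq_0_if_const_near[OF assms(1) _ assms(3)]
      assms(3) by simp
qed

lemma mult_mem_atLeastAtMost_min:
  fixes d x :: real
  assumes "d > 0" "x \<in> {0..min (\<epsilon> / d) l}"
  shows "d * x \<in> {0..min \<epsilon> (d * l)}"
proof -
  have "d * x \<le> d * (\<epsilon> / d)" "d * x \<le> d * l"
    using assms by (auto intro!: mult_left_mono simp del: times_divide_eq_right)
  then show ?thesis
    using assms by auto
qed

lemma const_near_rescale:
  assumes "const_near (d * l) g" "d > 0"
  shows "const_near l (\<lambda>x. g (d * x))"
proof -
  obtain \<epsilon> where "\<epsilon> > 0" and const: "\<forall>y\<in>{0..min \<epsilon> (d * l)}. g y = g 0"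
    using assms(1) unfolding const_near_def by blast
  then have "\<forall>x\<in>{0..min (\<epsilon> / d) l}. g (d * x) = g (d * 0)"
    using mult_mem_atLeastAtMost_min[OF assms(2)] by (metis mult_zero_right)
  then show ?thesis
    unfolding const_near_def using \<open>\<epsilon> > 0\<close> assms(2) by (intro exI[of _ "\<epsilon> / d"]) simp
qed

lemma zero_near_rescale:
  assumes "zero_near (d * l) g" "d > 0"
  shows "zero_near l (\<lambda>x. k * g (d * x))"
proof -
  obtain \<epsilon> where "\<epsilon> > 0" and zero: "\<forall>y\<in>{0..min \<epsilon> (d * l)}. g y = 0"
    using assms(1) unfolding zero_near_def by blast
  then have "\<forall>x\<in>{0..min (\<epsilon> / d) l}. k * g (d * x) = 0"
    using mult_mem_atLeastAtMost_min[OF assms(2)] by (metis mult_zero_right)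
  then show ?thesis
    unfolding zero_near_def using \<open>\<epsilon> > 0\<close> assms(2) by (intro exI[of _ "\<epsilon> / d"]) simp
qed

lemma rescale_reflect:
  fixes d :: real
  assumes "\<forall>y\<in>{0..d * l}. g2 y = s * g1 (d * l - y)" "d > 0" "x \<in> {0..l}"
  shows "g2 (d * x) = s * g1 (d * (l - x))"
proof -
  have "d * x \<in> {0..d * l}"
    using assms(2,3) by (auto intro: mult_left_mono)
  then show ?thesis
    using assms(1) by (simp add: right_diff_distrib)
qed

lemma pair_smooth_rescale:
  assumes "pair_smooth w1 g1 w2 g2" "smooth_fun g1" "smooth_fun g2"
    and "real w1' * d1 = c * real w1" "real w2' * d2 = c * real w2"
  shows "pair_smooth w1' (\<lambda>x. k * g1 (d1 * x)) w2' (\<lambda>x. k * g2 (d2 * x))"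
  unfolding pair_smooth_def
proof
  fix n
  have "real w1' ^ n * (k * d1 ^ n * nderiv n g1 0) = k * c ^ n * (real w1 ^ n * nderiv n g1 0)"
    using assms(4) by (simp add: algebra_simps flip: power_mult_distrib)
  also have "\<dots> = k * c ^ n * ((-1) ^ n * real w2 ^ n * nderiv n g2 0)"
    using assms(1) by (simp add: pair_smooth_def)
  also have "\<dots> = (-1) ^ n * real w2' ^ n * (k * d2 ^ n * nderiv n g2 0)"
    using assms(5) by (simp add: algebra_simps flip: power_mult_distrib)
  finally show "real w1' ^ n * nderiv n (\<lambda>x. k * g1 (d1 * x)) 0 =
      (-1) ^ n * real w2' ^ n * nderiv n (\<lambda>x. k * g2 (d2 * x)) 0"
    using assms(2,3) by (simp add: nderiv_rescale)
qed

lemma pair_smooth_if_const_near: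
  assumes "smooth_fun g1" "const_near l1 g1" "l1 > 0"
    and "smooth_fun g2" "const_near l2 g2" "l2 > 0"
    and "g1 0 = g2 0"
  shows "pair_smooth w1 g1 w2 g2"
  unfolding pair_smooth_def
proof
  fix n
  show "real w1 ^ n * nderiv n g1 0 = (-1) ^ n * real w2 ^ n * nderiv n g2 0"
    using assms nderiv_Suc_eq_0_if_const_near by (cases n) (auto simp: nderiv_def)
qed

lemma pair_smooth_if_zero_near:
  assumes "smooth_fun g1" "zero_near l1 g1" "l1 > 0"
    and "smooth_fun g2" "zero_near l2 g2" "l2 > 0"
  shows "pair_smooth w1 (\<lambda>x. k1 * g1 x) w2 (\<lambda>x. k2 * g2 x)"
  using assms by (simp add: pair_smooth_def nderiv_cmult nderiv_eq_0_if_zero_near)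

section \<open>Forms on a weighted metric graph\<close>

definition interior_leaf_edge :: "('v, 'e, 'z) wmgraph_scheme \<Rightarrow> 'e \<Rightarrow> bool" where
  "interior_leaf_edge G e \<longleftrightarrow> src G e \<in> interior_verts G \<and> out_edges G (src G e) = {e}"

lemma wmgraph_edge:
  assumes "is_wmgraph G" "e \<in> edges G"
  shows "src G e \<in> verts G \<and> rev G e \<in> edges G \<and> rev G (rev G e) = e \<and>
    rev G e \<noteq> e \<and> tgt G e \<noteq> src G e \<and> len G e > 0 \<and> len G (rev G e) = len G e \<and>
    wt G e > 0 \<and> wt G (rev G e) = wt G e"
  using assms unfolding is_wmgraph_def by (elim conjE bspec)

lemma finite_out_edges: "is_wmgraph G \<Longrightarrow> finite (out_edges G v)"
  unfolding is_wmgraph_def out_edges_def by simp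

lemma len_pos: "is_wmgraph G \<Longrightarrow> e \<in> edges G \<Longrightarrow> len G e > 0"
  using wmgraph_edge[of G e] by simp

lemma out_edges_eq_singleton: "valency G v = 1 \<Longrightarrow> e \<in> out_edges G v \<Longrightarrow> out_edges G v = {e}"
  unfolding valency_def by (metis card_1_singletonE singletonD)

lemma out_edges_eq_pair:
  assumes "is_wmgraph G" "valency G v = 2" "e1 \<in> out_edges G v" "e2 \<in> out_edges G v" "e1 \<noteq> e2"
  shows "out_edges G v = {e1, e2}"
proof (rule card_subset_eq[symmetric])
  show "card {e1, e2} = card (out_edges G v)"
    using assms(2,5) by (simp add: valency_def)
qed (use assms finite_out_edges in auto)

lemma valency_pair: "out_edges G v = {e1, e2} \<Longrightarrow> e1 \<noteq> e2 \<Longrightarrow> valency G v = 2"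
  by (simp add: valency_def)

lemma valency_singleton: "out_edges G v = {e} \<Longrightarrow> valency G v = 1"
  by (simp add: valency_def)

lemma src_out_edge: "e \<in> out_edges G v \<Longrightarrow> e \<in> edges G \<and> src G e = v"
  by (simp add: out_edges_def)

lemma interior_leaf_edgeI:
  assumes "v \<in> interior_verts G" "out_edges G v = {e}"
  shows "interior_leaf_edge G e"
  using assms src_out_edge[of e G v] by (simp add: interior_leaf_edge_def)

lemma out_edges_cases:
  assumes "is_wmgraph G"
  obtains "out_edges G v = {}"
  | e where "out_edges G v = {e}"
  | e1 e2 where "out_edges G v = {e1, e2}" "e1 \<noteq> e2"
  | "valency G v \<ge> 3"
proof -
  consider "valency G v = 0" | "valency G v = 1" | "valency G v = 2" | "valency G v \<ge> 3"
    by linarith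
  then show ?thesis
  proof cases
    case 1
    then show ?thesis
      using that(1) finite_out_edges[OF assms, of v] by (simp add: valency_def)
  next
    case 2
    then show ?thesis
      using that(2) card_1_singletonE unfolding valency_def by metis
  next
    case 3
    then show ?thesis
      using that(3) unfolding valency_def card_2_iff by blast
  qed (use that(4) in blast)
qed

lemma leaf_edge_vertex:
  "interior_leaf_edge G e \<Longrightarrow>
    src G e \<in> interior_verts G \<and> valency G (src G e) = 1 \<and> e \<in> out_edges G (src G e)"
  by (simp add: interior_leaf_edge_def valency_singleton)

lemma A00_edge:
  assumes "(fv, fe) \<in> A00 G" "e \<in> edges G"
  shows "smooth_fun (fe e) \<and> fe e 0 = fv (src G e) \<and>
    (\<forall>x\<in>{0..len G e}. fe (rev G e) x = fe e (len G e - x))"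
  using assms unfolding A00_def mem_Collect_eq case_prod_conv by (elim conjE bspec)

lemma A00_vertex:
  assumes "(fv, fe) \<in> A00 G" "v \<in> interior_verts G"
  shows "(valency G v = 1 \<longrightarrow> (\<forall>e\<in>out_edges G v. const_near (len G e) (fe e))) \<and>
    (valency G v = 2 \<longrightarrow> (\<forall>e1\<in>out_edges G v. \<forall>e2\<in>out_edges G v. e1 \<noteq> e2 \<longrightarrow>
        pair_smooth (wt G e1) (fe e1) (wt G e2) (fe e2))) \<and>
    (valency G v \<ge> 3 \<longrightarrow> (\<Sum>e\<in>out_edges G v. real (wt G e) * deriv (fe e) 0) = 0)"
  using assms unfolding A00_def mem_Collect_eq case_prod_conv by (elim conjE bspec)

lemma A1_coeffs_edge:
  assumes "f \<in> A1_coeffs G" "e \<in> edges G"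
  shows "smooth_fun (f e) \<and> (\<forall>x\<in>{0..len G e}. f (rev G e) x = - f e (len G e - x))"
  using assms unfolding A1_coeffs_def mem_Collect_eq by (elim conjE bspec)

lemma A1_coeffs_vertex:
  assumes "f \<in> A1_coeffs G" "v \<in> interior_verts G"
  shows "(valency G v = 1 \<longrightarrow> (\<forall>e\<in>out_edges G v. zero_near (len G e) (f e))) \<and>
    (valency G v = 2 \<longrightarrow> (\<forall>e1\<in>out_edges G v. \<forall>e2\<in>out_edges G v. e1 \<noteq> e2 \<longrightarrow>
        pair_smooth (wt G e1) (\<lambda>x. real (wt G e1) * f e1 x)
                    (wt G e2) (\<lambda>x. - real (wt G e2) * f e2 x))) \<and>
    (valency G v \<ge> 3 \<longrightarrow> (\<Sum>e\<in>out_edges G v. real (wt G e) * f e 0) = 0)"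
  using assms unfolding A1_coeffs_def mem_Collect_eq by (elim conjE bspec)

lemma A11_edge:
  assumes "f \<in> A11 G" "e \<in> edges G"
  shows "smooth_fun (f e) \<and> (\<forall>x\<in>{0..len G e}. f (rev G e) x = f e (len G e - x))"
  using assms unfolding A11_def mem_Collect_eq by (elim conjE bspec)

lemma A11_vertex:
  assumes "f \<in> A11 G" "v \<in> interior_verts G"
  shows "(valency G v = 1 \<longrightarrow> (\<forall>e\<in>out_edges G v. zero_near (len G e) (f e))) \<and>
    (valency G v = 2 \<longrightarrow> (\<forall>e1\<in>out_edges G v. \<forall>e2\<in>out_edges G v. e1 \<noteq> e2 \<longrightarrow>
        pair_smooth (wt G e1) (\<lambda>x. real (wt G e1) ^ 2 * f e1 x)
                    (wt G e2) (\<lambda>x. real (wt G e2) ^ 2 * f e2 x)))"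
  using assms unfolding A11_def mem_Collect_eq by (elim conjE bspec)

lemma A00_const_near_leaf:
  assumes "(fv, fe) \<in> A00 G" "interior_leaf_edge G e"
  shows "const_near (len G e) (fe e)"
proof -
  have v: "src G e \<in> interior_verts G" "valency G (src G e) = 1" "e \<in> out_edges G (src G e)"
    using leaf_edge_vertex[OF assms(2)] by auto
  show ?thesis
    using A00_vertex[OF assms(1) v(1)] v(2,3) by simp
qed

lemma A1_coeffs_zero_near_leaf:
  assumes "f \<in> A1_coeffs G" "interior_leaf_edge G e"
  shows "zero_near (len G e) (f e)"
proof -
  have v: "src G e \<in> interior_verts G" "valency G (src G e) = 1" "e \<in> out_edges G (src G e)"
    using leaf_edge_vertex[OF assms(2)] by auto
  show ?thesis
    using A1_coeffs_vertex[OF assms(1) v(1)] v(2,3) by simp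
qed

lemma A11_zero_near_leaf:
  assumes "f \<in> A11 G" "interior_leaf_edge G e"
  shows "zero_near (len G e) (f e)"
proof -
  have v: "src G e \<in> interior_verts G" "valency G (src G e) = 1" "e \<in> out_edges G (src G e)"
    using leaf_edge_vertex[OF assms(2)] by auto
  show ?thesis
    using A11_vertex[OF assms(1) v(1)] v(2,3) by simp
qed

lemma A00_pair_smooth:
  assumes "(fv, fe) \<in> A00 G" "v \<in> interior_verts G" "out_edges G v = {e1, e2}" "e1 \<noteq> e2"
  shows "pair_smooth (wt G e1) (fe e1) (wt G e2) (fe e2)"
  using A00_vertex[OF assms(1,2)] valency_pair[OF assms(3,4)] assms(3,4) by simp

lemma A1_coeffs_pair_smooth:
  assumes "f \<in> A1_coeffs G" "v \<in> interior_verts G" "out_edges G v = {e1, e2}" "e1 \<noteq> e2"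
  shows "pair_smooth (wt G e1) (\<lambda>x. real (wt G e1) * f e1 x)
    (wt G e2) (\<lambda>x. - real (wt G e2) * f e2 x)"
  using A1_coeffs_vertex[OF assms(1,2)] valency_pair[OF assms(3,4)] assms(3,4) by simp

lemma A11_pair_smooth:
  assumes "f \<in> A11 G" "v \<in> interior_verts G" "out_edges G v = {e1, e2}" "e1 \<noteq> e2"
  shows "pair_smooth (wt G e1) (\<lambda>x. real (wt G e1) ^ 2 * f e1 x)
    (wt G e2) (\<lambda>x. real (wt G e2) ^ 2 * f e2 x)"
  using A11_vertex[OF assms(1,2)] valency_pair[OF assms(3,4)] assms(3,4) by simp

lemma A00_balanced:
  assumes G: "is_wmgraph G" and F: "(fv, fe) \<in> A00 G" and v: "v \<in> interior_verts G"
  shows "(\<Sum>e\<in>out_edges G v. real (wt G e) * deriv (fe e) 0) = 0"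
  using G
proof (cases rule: out_edges_cases[of G v])
  case (2 e)
  then have e: "e \<in> edges G" "interior_leaf_edge G e"
    using v src_out_edge[of e G v] interior_leaf_edgeI[of v G e] by auto
  have "nderiv (Suc 0) (fe e) 0 = 0"
    using nderiv_Suc_eq_0_if_const_near[OF conjunct1[OF A00_edge[OF F e(1)]]
        A00_const_near_leaf[OF F e(2)] len_pos[OF G e(1)]] .
  then show ?thesis
    using 2 by (simp add: nderiv_def)
next
  case (3 e1 e2)
  then have "real (wt G e1) ^ 1 * nderiv 1 (fe e1) 0 =
      (-1) ^ 1 * real (wt G e2) ^ 1 * nderiv 1 (fe e2) 0"
    using A00_pair_smooth[OF F v] unfolding pair_smooth_def by blast
  then show ?thesis
    using 3 by (simp add: nderiv_def)
next
  case 4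
  then show ?thesis
    using A00_vertex[OF F v] by simp
qed simp

lemma A1_coeffs_balanced:
  assumes G: "is_wmgraph G" and f: "f \<in> A1_coeffs G" and v: "v \<in> interior_verts G"
  shows "(\<Sum>e\<in>out_edges G v. real (wt G e) * f e 0) = 0"
  using G
proof (cases rule: out_edges_cases[of G v])
  case (2 e)
  then have e: "e \<in> edges G" "interior_leaf_edge G e"
    using v src_out_edge[of e G v] interior_leaf_edgeI[of v G e] by auto
  have "f e 0 = 0"
    using const_near_if_zero_near[OF A1_coeffs_zero_near_leaf[OF f e(2)]] len_pos[OF G e(1)]
    by simp
  then show ?thesis
    using 2 by simp
next
  case (3 e1 e2)
  then have "real (wt G e1) ^ 0 * nderiv 0 (\<lambda>x. real (wt G e1) * f e1 x) 0 =
      (-1) ^ 0 * real (wt G e2) ^ 0 * nderiv 0 (\<lambda>x. - real (wt G e2) * f e2 x) 0"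
    using A1_coeffs_pair_smooth[OF f v] unfolding pair_smooth_def by blast
  then show ?thesis
    using 3 by (simp add: nderiv_def)
next
  case 4
  then show ?thesis
    using A1_coeffs_vertex[OF f v] by simp
qed simp

lemma eq_coeffs_refl: "eq_coeffs G f f"
  by (simp add: eq_coeffs_def)

lemma eq_form0_refl: "eq_form0 G F F"
  by (simp add: eq_form0_def eq_coeffs_def)

lemma d''_00_eq_d'_00: "d''_00 = d'_00"
  by (simp add: fun_eq_iff d'_00_def d''_00_def)

section \<open>Pullback along piecewise linear maps\<close>

definition pull_coeffs ::
  "nat \<Rightarrow> ('v2, 'e2, 'z2) wmgraph_scheme \<Rightarrow> ('v, 'e, 'z) wmgraph_scheme \<Rightarrow>
   ('e2 \<Rightarrow> 'e option) \<Rightarrow> 'e coeffs \<Rightarrow> 'e2 coeffs" where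
  "pull_coeffs p G' G phiE f =
     (\<lambda>e' x. case phiE e' of
               None \<Rightarrow> 0
             | Some e \<Rightarrow> dfac G' G phiE e' ^ p * f e (dfac G' G phiE e' * x))"

lemma pull_coeffs_Some:
  "phiE e' = Some e \<Longrightarrow>
    pull_coeffs p G' G phiE f e' = (\<lambda>x. dfac G' G phiE e' ^ p * f e (dfac G' G phiE e' * x))"
  by (simp add: pull_coeffs_def fun_eq_iff)

lemma pull_coeffs_None: "phiE e' = None \<Longrightarrow> pull_coeffs p G' G phiE f e' = (\<lambda>x. 0)"
  by (simp add: pull_coeffs_def fun_eq_iff)

lemma pull0_Some:
  "phiE e' = Some e \<Longrightarrow>
    snd (pull0 G' G phiV phiE F) e' = (\<lambda>x. snd F e (dfac G' G phiE e' * x))"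
  by (simp add: pull0_def fun_eq_iff)

lemma pull0_None:
  "phiE e' = None \<Longrightarrow> snd (pull0 G' G phiV phiE F) e' = (\<lambda>x. fst F (phiV (src G' e')))"
  by (simp add: pull0_def fun_eq_iff)

lemma pull1_eq_pull_coeffs: "pull1 G' G phiE = pull_coeffs 1 G' G phiE"
  by (simp add: fun_eq_iff pull1_def pull_coeffs_def mult.commute split: option.split)

lemma pull2_eq_pull_coeffs: "pull2 G' G phiE = pull_coeffs 2 G' G phiE"
  by (simp add: fun_eq_iff pull2_def pull_coeffs_def mult.commute split: option.split)

lemma pull0_lin0:
  "pull0 G' G phiV phiE (lin0 s F t H) =
    lin0 s (pull0 G' G phiV phiE F) t (pull0 G' G phiV phiE H)"
  by (simp add: fun_eq_iff pull0_def lin0_def split: option.split)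

lemma pull0_one0: "pull0 G' G phiV phiE one0 = one0"
  by (simp add: fun_eq_iff pull0_def one0_def split: option.split)

lemma pull0_mult00:
  "pull0 G' G phiV phiE (mult00 F H) = mult00 (pull0 G' G phiV phiE F) (pull0 G' G phiV phiE H)"
  by (simp add: fun_eq_iff pull0_def mult00_def split: option.split)

lemma pull_coeffs_lin1:
  "pull_coeffs p G' G phiE (lin1 s a t b) =
    lin1 s (pull_coeffs p G' G phiE a) t (pull_coeffs p G' G phiE b)"
  by (simp add: fun_eq_iff pull_coeffs_def lin1_def algebra_simps split: option.split)

lemma pull_coeffs_mult0:
  "pull_coeffs p G' G phiE (mult0 F a) = mult0 (pull0 G' G phiV phiE F) (pull_coeffs p G' G phiE a)"
  by (simp add: fun_eq_iff pull_coeffs_def pull0_def mult0_def algebra_simps split: option.split)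

lemma pull_coeffs_wedge:
  "pull_coeffs (p + q) G' G phiE (wedge_10_01 a b) =
    wedge_10_01 (pull_coeffs p G' G phiE a) (pull_coeffs q G' G phiE b)"
  by (simp add: fun_eq_iff pull_coeffs_def wedge_10_01_def power_add algebra_simps
      split: option.split)

locale pl_graph_map =
  fixes G :: "('v, 'e, 'z) wmgraph_scheme" and G' :: "('v2, 'e2, 'z2) wmgraph_scheme"
    and phiV :: "'v2 \<Rightarrow> 'v" and phiE :: "'e2 \<Rightarrow> 'e option"
  assumes graph: "is_wmgraph G" and graph': "is_wmgraph G'"
    and pl_map: "pl_map G' G phiV phiE"
begin

abbreviation dphi :: "'e2 \<Rightarrow> real" where
  "dphi \<equiv> dfac G' G phiE"

lemma edge_image_cases:
  "e' \<in> edges G' \<Longrightarrow> (case phiE e' of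
      None \<Rightarrow> phiV (src G' e') = phiV (tgt G' e') \<and> phiE (rev G' e') = None
    | Some e \<Rightarrow> e \<in> edges G \<and> src G e = phiV (src G' e') \<and> phiE (rev G' e') = Some (rev G e))"
  using pl_map unfolding pl_map_def by (elim conjE bspec)

lemma edge_image:
  "e' \<in> edges G' \<Longrightarrow> phiE e' = Some e \<Longrightarrow>
    e \<in> edges G \<and> src G e = phiV (src G' e') \<and> phiE (rev G' e') = Some (rev G e)"
  using edge_image_cases[of e'] by simp

lemma contracted_edge:
  "e' \<in> edges G' \<Longrightarrow> phiE e' = None \<Longrightarrow>
    phiV (tgt G' e') = phiV (src G' e') \<and> phiE (rev G' e') = None"
  using edge_image_cases[of e'] by simp

lemma dphi_pos: "e' \<in> edges G' \<Longrightarrow> phiE e' = Some e \<Longrightarrow> dphi e' > 0"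
  using edge_image len_pos[OF graph] len_pos[OF graph'] by (simp add: dfac_def)

lemma len_image: "e' \<in> edges G' \<Longrightarrow> phiE e' = Some e \<Longrightarrow> len G e = dphi e' * len G' e'"
  using len_pos[OF graph', of e'] by (simp add: dfac_def)

lemma dphi_rev:
  assumes "e' \<in> edges G'"
  shows "dphi (rev G' e') = dphi e'"
proof (cases "phiE e'")
  case (Some e)
  then show ?thesis
    using edge_image[OF _ Some] wmgraph_edge[OF graph] wmgraph_edge[OF graph'] assms
    by (simp add: dfac_def)
qed (use contracted_edge assms in \<open>simp add: dfac_def\<close>)

lemma vertex_image: "v' \<in> verts G' \<Longrightarrow> phiV v' \<in> verts G"
  using pl_map unfolding pl_map_def by (elim conjE bspec)

lemma boundary_preimage:
  "v' \<in> verts G' \<Longrightarrow>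
    phiV v' \<in> bdry G \<and> (\<exists>e'\<in>out_edges G' v'. phiE e' \<noteq> None) \<longrightarrow> v' \<in> bdry G'"
  using pl_map unfolding pl_map_def by (elim conjE bspec)

lemma interior_vertex_image:
  assumes "v' \<in> interior_verts G'" "e' \<in> out_edges G' v'" "phiE e' = Some e"
  shows "phiV v' \<in> interior_verts G \<and> e \<in> out_edges G (phiV v')"
proof -
  have v': "v' \<in> verts G'" "v' \<notin> bdry G'"
    using assms(1) by (auto simp: interior_verts_def)
  have e': "e' \<in> edges G'" "src G' e' = v'"
    using src_out_edge[OF assms(2)] by auto
  have "phiV v' \<notin> bdry G"
    using boundary_preimage[OF v'(1)] v'(2) assms(2,3) by auto
  then show ?thesis
    using vertex_image[OF v'(1)] edge_image[OF e'(1) assms(3)] e'(2)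
    by (simp add: interior_verts_def out_edges_def)
qed

definition leaf_or_contracted :: "'e2 \<Rightarrow> bool" where
  "leaf_or_contracted e' \<longleftrightarrow> (case phiE e' of None \<Rightarrow> True | Some e \<Rightarrow> interior_leaf_edge G e)"

lemma pull_coeffs_smooth:
  assumes "\<forall>e\<in>edges G. smooth_fun (f e)" "e' \<in> edges G'"
  shows "smooth_fun (pull_coeffs p G' G phiE f e')"
proof (cases "phiE e'")
  case None
  then show ?thesis
    by (simp add: pull_coeffs_None smooth_fun_const)
next
  case (Some e)
  then show ?thesis
    using assms edge_image[OF assms(2) Some] by (simp add: pull_coeffs_Some smooth_fun_rescale)
qed

lemma pull_coeffs_reflect:
  assumes "\<forall>e\<in>edges G. \<forall>x\<in>{0..len G e}. f (rev G e) x = s * f e (len G e - x)"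
    and "e' \<in> edges G'" "x \<in> {0..len G' e'}"
  shows "pull_coeffs p G' G phiE f (rev G' e') x = s * pull_coeffs p G' G phiE f e' (len G' e' - x)"
proof (cases "phiE e'")
  case None
  then show ?thesis
    using contracted_edge[OF assms(2)] by (simp add: pull_coeffs_None)
next
  case (Some e)
  have e: "e \<in> edges G" "phiE (rev G' e') = Some (rev G e)"
    using edge_image[OF assms(2) Some] by auto
  have "f (rev G e) (dphi e' * x) = s * f e (dphi e' * (len G' e' - x))"
    using assms(1) e(1) len_image[OF assms(2) Some] dphi_pos[OF assms(2) Some] assms(3)
    by (intro rescale_reflect) auto
  then show ?thesis
    using Some e(2) dphi_rev[OF assms(2)] by (simp add: pull_coeffs_Some)
qed

lemma pull_coeffs_zero_near:
  assumes "\<And>e. interior_leaf_edge G e \<Longrightarrow> zero_near (len G e) (f e)"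
    and "e' \<in> edges G'" "leaf_or_contracted e'"
  shows "zero_near (len G' e') (pull_coeffs p G' G phiE f e')"
proof (cases "phiE e'")
  case None
  then show ?thesis
    by (auto simp: pull_coeffs_None zero_near_def intro: exI[of _ 1])
next
  case (Some e)
  then have "zero_near (len G e) (f e)"
    using assms by (simp add: leaf_or_contracted_def)
  then have "zero_near (dphi e' * len G' e') (f e)"
    using len_image[OF assms(2) Some] by simp
  then show ?thesis
    using Some dphi_pos[OF assms(2) Some] by (simp add: pull_coeffs_Some zero_near_rescale)
qed

lemma pull0_edge:
  assumes F: "(fv, fe) \<in> A00 G" and e': "e' \<in> edges G'"
  defines "P \<equiv> snd (pull0 G' G phiV phiE (fv, fe))"
  shows "smooth_fun (P e') \<and> P e' 0 = fv (phiV (src G' e')) \<and>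
    (\<forall>x\<in>{0..len G' e'}. P (rev G' e') x = P e' (len G' e' - x))"
proof (cases "phiE e'")
  case None
  then show ?thesis
    using contracted_edge[OF e'] by (simp add: P_def pull0_None smooth_fun_const tgt_def)
next
  case (Some e)
  have e: "e \<in> edges G" "src G e = phiV (src G' e')" "phiE (rev G' e') = Some (rev G e)"
    using edge_image[OF e' Some] by auto
  have fe: "smooth_fun (fe e)" "fe e 0 = fv (src G e)"
    "\<forall>y\<in>{0..dphi e' * len G' e'}. fe (rev G e) y = 1 * fe e (dphi e' * len G' e' - y)"
    using A00_edge[OF F e(1)] len_image[OF e' Some] by auto
  have "P (rev G' e') x = P e' (len G' e' - x)" if "x \<in> {0..len G' e'}" for x
    using rescale_reflect[OF fe(3) dphi_pos[OF e' Some] that] Some e(3) dphi_rev[OF e']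
    by (simp add: P_def pull0_Some)
  moreover have "smooth_fun (P e')"
    using smooth_fun_rescale[OF fe(1), of 1] Some by (simp add: P_def pull0_Some)
  ultimately show ?thesis
    using Some fe(2) e(2) by (simp add: P_def pull0_Some)
qed

lemma pull0_const_near:
  assumes F: "(fv, fe) \<in> A00 G" and e': "e' \<in> edges G'" "leaf_or_contracted e'"
  shows "const_near (len G' e') (snd (pull0 G' G phiV phiE (fv, fe)) e')"
proof (cases "phiE e'")
  case None
  then show ?thesis
    by (auto simp: pull0_None const_near_def intro: exI[of _ 1])
next
  case (Some e)
  then have "const_near (len G e) (fe e)"
    using A00_const_near_leaf[OF F] e' by (simp add: leaf_or_contracted_def)
  then have "const_near (dphi e' * len G' e') (fe e)"
    using len_image[OF e'(1) Some] by simp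
  then show ?thesis
    using Some dphi_pos[OF e'(1) Some] by (simp add: pull0_Some const_near_rescale)
qed

lemma deriv_pull_coeffs:
  assumes "\<forall>e\<in>edges G. smooth_fun (f e)" "e' \<in> edges G'"
  shows "deriv (pull_coeffs p G' G phiE f e') x =
    pull_coeffs (Suc p) G' G phiE (\<lambda>e. deriv (f e)) e' x"
proof (cases "phiE e'")
  case None
  then show ?thesis
    by (simp add: pull_coeffs_None)
next
  case (Some e)
  then show ?thesis
    using assms edge_image[OF assms(2) Some] by (simp add: pull_coeffs_Some deriv_rescale)
qed

lemma deriv_pull0:
  assumes "\<forall>e\<in>edges G. smooth_fun (snd F e)" "e' \<in> edges G'"
  shows "deriv (snd (pull0 G' G phiV phiE F) e') x = pull_coeffs 1 G' G phiE (d'_00 F) e' x"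
proof (cases "phiE e'")
  case None
  then show ?thesis
    by (simp add: pull0_None pull_coeffs_None)
next
  case (Some e)
  then show ?thesis
    using assms edge_image[OF assms(2) Some] deriv_rescale[of "snd F e" 1]
    by (simp add: pull0_Some pull_coeffs_Some d'_00_def)
qed

lemma pull0_d'_00:
  assumes "F \<in> A00 G"
  shows "eq_coeffs G' (pull_coeffs 1 G' G phiE (d'_00 F)) (d'_00 (pull0 G' G phiV phiE F))"
proof -
  obtain fv fe where F: "F = (fv, fe)"
    by fastforce
  have "\<forall>e\<in>edges G. smooth_fun (fe e)"
    using A00_edge[OF assms[unfolded F]] by simp
  then show ?thesis
    using deriv_pull0[of F] by (simp add: F eq_coeffs_def d'_00_def[of "pull0 G' G phiV phiE (fv, fe)"])
qed

lemma pull_coeffs_d''_10: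
  assumes "a \<in> A1_coeffs G"
  shows "eq_coeffs G' (pull_coeffs 2 G' G phiE (d''_10 a)) (d''_10 (pull_coeffs 1 G' G phiE a))"
  using deriv_pull_coeffs[of a _ 1] A1_coeffs_edge[OF assms]
  by (simp add: eq_coeffs_def d''_10_def pull_coeffs_def numeral_2_eq_2 split: option.split)

lemma pull_coeffs_d'_01:
  assumes "b \<in> A1_coeffs G"
  shows "eq_coeffs G' (pull_coeffs 2 G' G phiE (d'_01 b)) (d'_01 (pull_coeffs 1 G' G phiE b))"
  using deriv_pull_coeffs[of b _ 1] A1_coeffs_edge[OF assms]
  by (simp add: eq_coeffs_def d'_01_def pull_coeffs_def numeral_2_eq_2 split: option.split)

end

section \<open>Harmonic maps\<close>

locale harmonic_graph_map = pl_graph_map +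
  assumes balancing: "\<forall>v'\<in>verts G' - bdry G'. \<exists>c. \<forall>e\<in>out_edges G (phiV v').
     (\<Sum>e'\<in>{e'\<in>out_edges G' v'. phiE e' = Some e}.
        real (wt G' e') / real (wt G e) * dfac G' G phiE e') = c"
begin

lemma local_degree:
  assumes v': "v' \<in> interior_verts G'" and e0': "e0' \<in> out_edges G' v'" "phiE e0' = Some e0"
  obtains m where "m > 0"
    "\<And>e. e \<in> out_edges G (phiV v') \<Longrightarrow>
      (\<Sum>e'\<in>{e'\<in>out_edges G' v'. phiE e' = Some e}. real (wt G' e') * dphi e') = m * real (wt G e)"
proof -
  let ?fibre = "\<lambda>e. {e'\<in>out_edges G' v'. phiE e' = Some e}"
  have "v' \<in> verts G' - bdry G'"
    using v' by (simp add: interior_verts_def)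
  from bspec[OF balancing this] obtain c where
    c: "\<forall>e\<in>out_edges G (phiV v'). (\<Sum>e'\<in>?fibre e. real (wt G' e') / real (wt G e) * dphi e') = c" ..
  have degree: "(\<Sum>e'\<in>?fibre e. real (wt G' e') * dphi e') = c * real (wt G e)"
    if e: "e \<in> out_edges G (phiV v')" for e
  proof -
    have "wt G e > 0"
      using wmgraph_edge[OF graph] src_out_edge[OF e] by simp
    then have "(\<Sum>e'\<in>?fibre e. real (wt G' e') * dphi e') =
        (\<Sum>e'\<in>?fibre e. real (wt G' e') / real (wt G e) * dphi e') * real (wt G e)"
      by (simp add: sum_distrib_right)
    then show ?thesis
      using c e by simp
  qed
  have term_pos: "real (wt G' e') * dphi e' > 0" if "e' \<in> ?fibre e" for e e'
    using that src_out_edge[of e' G' v'] wmgraph_edge[OF graph', of e'] dphi_pos[of e' e] by simp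
  have e0: "e0 \<in> out_edges G (phiV v')"
    using interior_vertex_image[OF v' e0'] by simp
  have "(\<Sum>e'\<in>?fibre e0. real (wt G' e') * dphi e') > 0"
    using e0' finite_out_edges[OF graph', of v'] term_pos
    by (intro sum_pos2[of _ e0']) (auto intro: less_imp_le)
  then have "c * real (wt G e0) > 0"
    using degree[OF e0] by simp
  then have "c > 0"
    by (simp add: zero_less_mult_iff)
  then show ?thesis
    by (rule that[OF _ degree])
qed

lemma star_onto:
  assumes v': "v' \<in> interior_verts G'" and e0': "e0' \<in> out_edges G' v'" "phiE e0' = Some e0"
    and e: "e \<in> out_edges G (phiV v')"
  shows "\<exists>e'\<in>out_edges G' v'. phiE e' = Some e"
proof (rule ccontr)
  assume "\<not> ?thesis"
  then have empty: "{e'\<in>out_edges G' v'. phiE e' = Some e} = {}"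
    by auto
  obtain m where "m > 0" and m: "\<And>e. e \<in> out_edges G (phiV v') \<Longrightarrow>
      (\<Sum>e'\<in>{e'\<in>out_edges G' v'. phiE e' = Some e}. real (wt G' e') * dphi e') = m * real (wt G e)"
    by (rule local_degree[OF v' e0'], rule that)
  have "m * real (wt G e) = 0"
    using m[OF e] unfolding empty by simp
  moreover have "wt G e > 0"
    using wmgraph_edge[OF graph] src_out_edge[OF e] by simp
  ultimately show False
    using \<open>m > 0\<close> by simp
qed

lemma balanced_pullback:
  assumes v': "v' \<in> interior_verts G'"
    and h: "phiV v' \<in> interior_verts G \<Longrightarrow> (\<Sum>e\<in>out_edges G (phiV v'). real (wt G e) * h e) = 0"
  shows "(\<Sum>e'\<in>out_edges G' v'. case phiE e' of
      None \<Rightarrow> 0 | Some e \<Rightarrow> real (wt G' e') * dphi e' * h e) = 0"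
proof (cases "\<exists>e'\<in>out_edges G' v'. phiE e' \<noteq> None")
  case False
  then show ?thesis
    by (intro sum.neutral) auto
next
  case True
  then obtain e0' e0 where e0': "e0' \<in> out_edges G' v'" "phiE e0' = Some e0"
    by auto
  obtain m where m: "\<And>e. e \<in> out_edges G (phiV v') \<Longrightarrow>
      (\<Sum>e'\<in>{e'\<in>out_edges G' v'. phiE e' = Some e}. real (wt G' e') * dphi e') = m * real (wt G e)"
    by (rule local_degree[OF v' e0'], rule that)
  let ?S' = "out_edges G' v'" and ?S = "out_edges G (phiV v')"
  have fin: "finite ?S'" "finite ?S"
    using finite_out_edges[OF graph'] finite_out_edges[OF graph] by auto
  have "(case phiE e' of None \<Rightarrow> 0 | Some e \<Rightarrow> real (wt G' e') * dphi e' * h e) =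
      (\<Sum>e\<in>?S. if phiE e' = Some e then real (wt G' e') * dphi e' * h e else 0)"
    if e': "e' \<in> ?S'" for e'
  proof (cases "phiE e'")
    case (Some e)
    then show ?thesis
      using interior_vertex_image[OF v' e' Some] fin(2) by (simp add: sum.delta)
  qed simp
  then have "(\<Sum>e'\<in>?S'. case phiE e' of None \<Rightarrow> 0 | Some e \<Rightarrow> real (wt G' e') * dphi e' * h e) =
      (\<Sum>e\<in>?S. \<Sum>e'\<in>?S'. if phiE e' = Some e then real (wt G' e') * dphi e' * h e else 0)"
    by (simp add: sum.swap[of _ ?S])
  also have "\<dots> = (\<Sum>e\<in>?S. \<Sum>e'\<in>{e'\<in>?S'. phiE e' = Some e}. real (wt G' e') * dphi e' * h e)"
    using fin(1) by (simp add: sum.inter_filter)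
  also have "\<dots> = (\<Sum>e\<in>?S. (\<Sum>e'\<in>{e'\<in>?S'. phiE e' = Some e}. real (wt G' e') * dphi e') * h e)"
    by (simp add: sum_distrib_right)
  also have "\<dots> = m * (\<Sum>e\<in>?S. real (wt G e) * h e)"
    by (simp add: m sum_distrib_left mult.assoc)
  also have "\<dots> = 0"
    using h interior_vertex_image[OF v' e0'] by simp
  finally show ?thesis .
qed

lemma leaf_or_contracted_if_single_image:
  assumes v': "v' \<in> interior_verts G'" and e': "e' \<in> out_edges G' v'"
    and single: "\<And>e1' e2' e1 e2. e1' \<in> out_edges G' v' \<Longrightarrow> e2' \<in> out_edges G' v' \<Longrightarrow>
      phiE e1' = Some e1 \<Longrightarrow> phiE e2' = Some e2 \<Longrightarrow> e1 = e2"
  shows "leaf_or_contracted e'"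
proof (cases "phiE e'")
  case None
  then show ?thesis
    by (simp add: leaf_or_contracted_def)
next
  case (Some e)
  have image: "phiV v' \<in> interior_verts G" "e \<in> out_edges G (phiV v')"
    using interior_vertex_image[OF v' e' Some] by auto
  have "out_edges G (phiV v') \<subseteq> {e}"
  proof
    fix e2
    assume "e2 \<in> out_edges G (phiV v')"
    then obtain e2' where "e2' \<in> out_edges G' v'" "phiE e2' = Some e2"
      using star_onto[OF v' e' Some] by blast
    then show "e2 \<in> {e}"
      using single[OF _ e' _ Some] by simp
  qed
  then have "out_edges G (phiV v') = {e}"
    using image(2) by auto
  then show ?thesis
    using Some interior_leaf_edgeI[OF image(1)] by (simp add: leaf_or_contracted_def)
qed

lemma valency1_leaf_or_contracted:
  assumes "v' \<in> interior_verts G'" "out_edges G' v' = {e'}"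
  shows "leaf_or_contracted e'"
  using assms by (intro leaf_or_contracted_if_single_image[of v']) auto

lemma valency2_cases:
  assumes v': "v' \<in> interior_verts G'" and out: "out_edges G' v' = {e1', e2'}" "e1' \<noteq> e2'"
  obtains (degenerate) "leaf_or_contracted e1'" "leaf_or_contracted e2'"
  | (regular) e1 e2 m where "phiE e1' = Some e1" "phiE e2' = Some e2" "e1 \<noteq> e2"
      "phiV v' \<in> interior_verts G" "out_edges G (phiV v') = {e1, e2}"
      "real (wt G' e1') * dphi e1' = m * real (wt G e1)"
      "real (wt G' e2') * dphi e2' = m * real (wt G e2)"
proof (cases "\<exists>e1 e2. phiE e1' = Some e1 \<and> phiE e2' = Some e2 \<and> e1 \<noteq> e2")
  case False
  then have "e1 = e2"
    if "e1'' \<in> out_edges G' v'" "e2'' \<in> out_edges G' v'" "phiE e1'' = Some e1" "phiE e2'' = Some e2"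
    for e1'' e2'' e1 e2
    using that out(1) by auto
  then have "leaf_or_contracted e1'" "leaf_or_contracted e2'"
    using leaf_or_contracted_if_single_image[OF v'] out(1) by auto
  then show ?thesis
    by (rule degenerate)
next
  case True
  then obtain e1 e2 where e: "phiE e1' = Some e1" "phiE e2' = Some e2" "e1 \<noteq> e2"
    by (elim exE conjE)
  have e1': "e1' \<in> out_edges G' v'" and e2': "e2' \<in> out_edges G' v'"
    using out(1) by auto
  obtain m where m: "\<And>e. e \<in> out_edges G (phiV v') \<Longrightarrow>
      (\<Sum>e'\<in>{e'\<in>out_edges G' v'. phiE e' = Some e}. real (wt G' e') * dphi e') = m * real (wt G e)"
    by (rule local_degree[OF v' e1' e(1)], rule that)
  have image: "phiV v' \<in> interior_verts G" "e1 \<in> out_edges G (phiV v')" "e2 \<in> out_edges G (phiV v')"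
    using interior_vertex_image[OF v' e1' e(1)] interior_vertex_image[OF v' e2' e(2)] by auto
  have "out_edges G (phiV v') \<subseteq> {e1, e2}"
  proof
    fix e
    assume "e \<in> out_edges G (phiV v')"
    then obtain e' where "e' \<in> {e1', e2'}" "phiE e' = Some e"
      using star_onto[OF v' e1' e(1)] out(1) by blast
    then show "e \<in> {e1, e2}"
      using e by auto
  qed
  then have star: "out_edges G (phiV v') = {e1, e2}"
    using image by auto
  have "{e'\<in>out_edges G' v'. phiE e' = Some e1} = {e1'}"
    "{e'\<in>out_edges G' v'. phiE e' = Some e2} = {e2'}"
    using out e by auto
  then have "real (wt G' e1') * dphi e1' = m * real (wt G e1)"
    "real (wt G' e2') * dphi e2' = m * real (wt G e2)"
    using m[OF image(2)] m[OF image(3)] by simp_all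
  then show ?thesis
    by (rule regular[OF e image(1) star])
qed

text \<open>The signs and exponent (s1, s2, p) are (1, -1, 1) for A1_coeffs and (1, 1, 2) for A11.\<close>

lemma pull_coeffs_pair_smooth:
  assumes smooth: "\<forall>e\<in>edges G. smooth_fun (f e)"
    and leaf: "\<And>e. interior_leaf_edge G e \<Longrightarrow> zero_near (len G e) (f e)"
    and pair: "\<And>v e1 e2. v \<in> interior_verts G \<Longrightarrow> out_edges G v = {e1, e2} \<Longrightarrow> e1 \<noteq> e2 \<Longrightarrow>
      pair_smooth (wt G e1) (\<lambda>x. s1 * real (wt G e1) ^ p * f e1 x)
        (wt G e2) (\<lambda>x. s2 * real (wt G e2) ^ p * f e2 x)"
    and v': "v' \<in> interior_verts G'" and out: "out_edges G' v' = {e1', e2'}" "e1' \<noteq> e2'"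
  shows "pair_smooth (wt G' e1') (\<lambda>x. s1 * real (wt G' e1') ^ p * pull_coeffs p G' G phiE f e1' x)
    (wt G' e2') (\<lambda>x. s2 * real (wt G' e2') ^ p * pull_coeffs p G' G phiE f e2' x)"
proof -
  have e': "e1' \<in> edges G'" "e2' \<in> edges G'"
    using out(1) unfolding out_edges_def by auto
  from v' out show ?thesis
  proof (cases rule: valency2_cases)
    case degenerate
    then show ?thesis
      using e' pull_coeffs_smooth[OF smooth] pull_coeffs_zero_near[OF leaf] len_pos[OF graph']
      by (intro pair_smooth_if_zero_near) auto
  next
    case (regular e1 e2 m)
    have e: "e1 \<in> edges G" "e2 \<in> edges G"
      using edge_image[OF e'(1) regular(1)] edge_image[OF e'(2) regular(2)] by auto
    have rescaled: "(\<lambda>x. s * real (wt G' e') ^ p * pull_coeffs p G' G phiE f e' x) =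
        (\<lambda>x. m ^ p * (s * real (wt G e) ^ p * f e (dphi e' * x)))"
      if "phiE e' = Some e" "real (wt G' e') * dphi e' = m * real (wt G e)" for s e' e
    proof -
      have "real (wt G' e') ^ p * dphi e' ^ p = m ^ p * real (wt G e) ^ p"
        using that(2) by (metis power_mult_distrib)
      then show ?thesis
        using that(1) by (simp add: fun_eq_iff pull_coeffs_Some algebra_simps)
    qed
    show ?thesis
      unfolding rescaled[OF regular(1,6)] rescaled[OF regular(2,7)]
      using e smooth pair[OF regular(4,5,3)] regular(6,7)
      by (intro pair_smooth_rescale) (auto intro: smooth_fun_cmult)
  qed
qed

lemma pull0_pair_smooth:
  assumes F: "(fv, fe) \<in> A00 G"
    and v': "v' \<in> interior_verts G'" and out: "out_edges G' v' = {e1', e2'}" "e1' \<noteq> e2'"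
  defines "P \<equiv> snd (pull0 G' G phiV phiE (fv, fe))"
  shows "pair_smooth (wt G' e1') (P e1') (wt G' e2') (P e2')"
proof -
  have e': "e1' \<in> edges G'" "e2' \<in> edges G'" "src G' e1' = v'" "src G' e2' = v'"
    using out(1) unfolding out_edges_def by auto
  from v' out show ?thesis
  proof (cases rule: valency2_cases)
    case degenerate
    then show ?thesis
      using e' pull0_edge[OF F] pull0_const_near[OF F] len_pos[OF graph']
      by (intro pair_smooth_if_const_near) (auto simp: P_def)
  next
    case (regular e1 e2 m)
    have e: "e1 \<in> edges G" "e2 \<in> edges G"
      using edge_image[OF e'(1) regular(1)] edge_image[OF e'(2) regular(2)] by auto
    have "pair_smooth (wt G' e1') (\<lambda>x. 1 * fe e1 (dphi e1' * x)) (wt G' e2') (\<lambda>x. 1 * fe e2 (dphi e2' * x))"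
      using e A00_edge[OF F] A00_pair_smooth[OF F regular(4,5,3)] regular(6,7)
      by (intro pair_smooth_rescale) auto
    then show ?thesis
      using regular(1,2) by (simp add: P_def pull0_Some)
  qed
qed

lemma pull0_balanced:
  assumes F: "(fv, fe) \<in> A00 G" and v': "v' \<in> interior_verts G'"
  defines "P \<equiv> snd (pull0 G' G phiV phiE (fv, fe))"
  shows "(\<Sum>e'\<in>out_edges G' v'. real (wt G' e') * deriv (P e') 0) = 0"
proof -
  have "real (wt G' e') * deriv (P e') 0 =
      (case phiE e' of None \<Rightarrow> 0 | Some e \<Rightarrow> real (wt G' e') * dphi e' * deriv (fe e) 0)"
    if e': "e' \<in> out_edges G' v'" for e'
    using deriv_pull0[of "(fv, fe)" e' 0] A00_edge[OF F] src_out_edge[OF e']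
    by (simp add: P_def d'_00_def pull_coeffs_def split: option.split)
  then have "(\<Sum>e'\<in>out_edges G' v'. real (wt G' e') * deriv (P e') 0) =
      (\<Sum>e'\<in>out_edges G' v'. case phiE e' of
         None \<Rightarrow> 0 | Some e \<Rightarrow> real (wt G' e') * dphi e' * deriv (fe e) 0)"
    by (rule sum.cong[OF refl])
  also have "\<dots> = 0"
    using A00_balanced[OF graph F] by (rule balanced_pullback[OF v'])
  finally show ?thesis .
qed

lemma pull0_A00:
  assumes F: "F \<in> A00 G"
  shows "pull0 G' G phiV phiE F \<in> A00 G'"
proof -
  obtain fv fe where F_eq: "F = (fv, fe)"
    by (cases F)
  define P where "P = snd (pull0 G' G phiV phiE F)"
  have pull: "pull0 G' G phiV phiE F = (\<lambda>v'. fv (phiV v'), P)"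
    by (simp add: P_def pull0_def F_eq)
  have F': "(fv, fe) \<in> A00 G"
    using F F_eq by simp
  have edge: "smooth_fun (P e') \<and> P e' 0 = fv (phiV (src G' e')) \<and>
      (\<forall>x\<in>{0..len G' e'}. P (rev G' e') x = P e' (len G' e' - x))"
    if "e' \<in> edges G'" for e'
    using pull0_edge[OF F' that] by (simp add: P_def F_eq)
  have leaf: "const_near (len G' e') (P e')"
    if "v' \<in> interior_verts G'" "valency G' v' = 1" "e' \<in> out_edges G' v'" for v' e'
    using pull0_const_near[OF F' _ valency1_leaf_or_contracted[OF that(1)
          out_edges_eq_singleton[OF that(2,3)]]] src_out_edge[OF that(3)]
    by (simp add: P_def F_eq)
  have pair: "pair_smooth (wt G' e1') (P e1') (wt G' e2') (P e2')"
    if "v' \<in> interior_verts G'" "valency G' v' = 2"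
      "e1' \<in> out_edges G' v'" "e2' \<in> out_edges G' v'" "e1' \<noteq> e2'" for v' e1' e2'
    using pull0_pair_smooth[OF F' that(1) out_edges_eq_pair[OF graph' that(2-5)] that(5)]
    by (simp add: P_def F_eq)
  have balanced: "(\<Sum>e'\<in>out_edges G' v'. real (wt G' e') * deriv (P e') 0) = 0"
    if "v' \<in> interior_verts G'" for v'
    using pull0_balanced[OF F' that] by (simp add: P_def F_eq)
  show ?thesis
    unfolding pull A00_def using edge leaf pair balanced by simp
qed

lemma pull_coeffs_A1_coeffs:
  assumes f: "f \<in> A1_coeffs G"
  shows "pull_coeffs 1 G' G phiE f \<in> A1_coeffs G'"
proof -
  let ?P = "pull_coeffs 1 G' G phiE f"
  have smooth: "\<forall>e\<in>edges G. smooth_fun (f e)"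
    using A1_coeffs_edge[OF f] by simp
  have edge: "smooth_fun (?P e') \<and> (\<forall>x\<in>{0..len G' e'}. ?P (rev G' e') x = - ?P e' (len G' e' - x))"
    if "e' \<in> edges G'" for e'
    using pull_coeffs_smooth[OF smooth that] pull_coeffs_reflect[of f "-1" e' _ 1]
      A1_coeffs_edge[OF f] that by simp
  have leaf: "zero_near (len G' e') (?P e')"
    if "v' \<in> interior_verts G'" "valency G' v' = 1" "e' \<in> out_edges G' v'" for v' e'
    using pull_coeffs_zero_near[OF A1_coeffs_zero_near_leaf[OF f] _ valency1_leaf_or_contracted[OF
          that(1) out_edges_eq_singleton[OF that(2,3)]]] src_out_edge[OF that(3)] by simp
  have pair: "pair_smooth (wt G' e1') (\<lambda>x. real (wt G' e1') * ?P e1' x)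
      (wt G' e2') (\<lambda>x. - real (wt G' e2') * ?P e2' x)"
    if "v' \<in> interior_verts G'" "valency G' v' = 2"
      "e1' \<in> out_edges G' v'" "e2' \<in> out_edges G' v'" "e1' \<noteq> e2'" for v' e1' e2'
  proof -
    have "pair_smooth (wt G e1) (\<lambda>x. 1 * real (wt G e1) ^ 1 * f e1 x)
        (wt G e2) (\<lambda>x. - 1 * real (wt G e2) ^ 1 * f e2 x)"
      if "v \<in> interior_verts G" "out_edges G v = {e1, e2}" "e1 \<noteq> e2" for v e1 e2
      using A1_coeffs_pair_smooth[OF f that] by simp
    from pull_coeffs_pair_smooth[OF smooth A1_coeffs_zero_near_leaf[OF f] this
        that(1) out_edges_eq_pair[OF graph' that(2-5)] that(5)]
    show ?thesis
      by simp
  qed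
  have balanced: "(\<Sum>e'\<in>out_edges G' v'. real (wt G' e') * ?P e' 0) = 0"
    if "v' \<in> interior_verts G'" for v'
  proof -
    have "(\<Sum>e'\<in>out_edges G' v'. real (wt G' e') * ?P e' 0) =
        (\<Sum>e'\<in>out_edges G' v'. case phiE e' of
           None \<Rightarrow> 0 | Some e \<Rightarrow> real (wt G' e') * dphi e' * f e 0)"
      by (intro sum.cong) (auto simp: pull_coeffs_def split: option.split)
    also have "\<dots> = 0"
      using A1_coeffs_balanced[OF graph f] by (rule balanced_pullback[OF that])
    finally show ?thesis .
  qed
  show ?thesis
    unfolding A1_coeffs_def using edge leaf pair balanced by simp
qed

lemma pull_coeffs_A11:
  assumes f: "f \<in> A11 G"
  shows "pull_coeffs 2 G' G phiE f \<in> A11 G'"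
proof -
  let ?P = "pull_coeffs 2 G' G phiE f"
  have smooth: "\<forall>e\<in>edges G. smooth_fun (f e)"
    using A11_edge[OF f] by simp
  have edge: "smooth_fun (?P e') \<and> (\<forall>x\<in>{0..len G' e'}. ?P (rev G' e') x = ?P e' (len G' e' - x))"
    if "e' \<in> edges G'" for e'
    using pull_coeffs_smooth[OF smooth that] pull_coeffs_reflect[of f 1 e' _ 2]
      A11_edge[OF f] that by simp
  have leaf: "zero_near (len G' e') (?P e')"
    if "v' \<in> interior_verts G'" "valency G' v' = 1" "e' \<in> out_edges G' v'" for v' e'
    using pull_coeffs_zero_near[OF A11_zero_near_leaf[OF f] _ valency1_leaf_or_contracted[OF
          that(1) out_edges_eq_singleton[OF that(2,3)]]] src_out_edge[OF that(3)] by simp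
  have pair: "pair_smooth (wt G' e1') (\<lambda>x. real (wt G' e1') ^ 2 * ?P e1' x)
      (wt G' e2') (\<lambda>x. real (wt G' e2') ^ 2 * ?P e2' x)"
    if "v' \<in> interior_verts G'" "valency G' v' = 2"
      "e1' \<in> out_edges G' v'" "e2' \<in> out_edges G' v'" "e1' \<noteq> e2'" for v' e1' e2'
  proof -
    have "pair_smooth (wt G e1) (\<lambda>x. 1 * real (wt G e1) ^ 2 * f e1 x)
        (wt G e2) (\<lambda>x. 1 * real (wt G e2) ^ 2 * f e2 x)"
      if "v \<in> interior_verts G" "out_edges G v = {e1, e2}" "e1 \<noteq> e2" for v e1 e2
      using A11_pair_smooth[OF f that] by simp
    from pull_coeffs_pair_smooth[OF smooth A11_zero_near_leaf[OF f] this
        that(1) out_edges_eq_pair[OF graph' that(2-5)] that(5)]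
    show ?thesis
      by simp
  qed
  show ?thesis
    unfolding A11_def using edge leaf pair by simp
qed

end

theorem lemma3p11:
  fixes G :: "('v, 'e) wmgraph" and G' :: "('v2, 'e2) wmgraph"
    and phiV :: "'v2 \<Rightarrow> 'v" and phiE :: "'e2 \<Rightarrow> 'e option"
  assumes "is_wmgraph G" and "is_wmgraph G'"
    and "harmonic_map G' G phiV phiE"
  shows
    \<comment> \<open>phi^* maps A^{p,q}(Sigma) into A^{p,q}(Sigma')\<close>
    "(\<forall>F\<in>A00 G. pull0 G' G phiV phiE F \<in> A00 G') \<and>
     (\<forall>a\<in>A10 G. pull1 G' G phiE a \<in> A10 G') \<and>
     (\<forall>b\<in>A01 G. pull1 G' G phiE b \<in> A01 G') \<and>
     (\<forall>c\<in>A11 G. pull2 G' G phiE c \<in> A11 G') \<and>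
     \<comment> \<open>linearity\<close>
     (\<forall>F\<in>A00 G. \<forall>H\<in>A00 G. \<forall>s t. eq_form0 G'
        (pull0 G' G phiV phiE (lin0 s F t H))
        (lin0 s (pull0 G' G phiV phiE F) t (pull0 G' G phiV phiE H))) \<and>
     (\<forall>a\<in>A10 G. \<forall>b\<in>A10 G. \<forall>s t. eq_coeffs G'
        (pull1 G' G phiE (lin1 s a t b)) (lin1 s (pull1 G' G phiE a) t (pull1 G' G phiE b))) \<and>
     (\<forall>a\<in>A01 G. \<forall>b\<in>A01 G. \<forall>s t. eq_coeffs G'
        (pull1 G' G phiE (lin1 s a t b)) (lin1 s (pull1 G' G phiE a) t (pull1 G' G phiE b))) \<and>
     (\<forall>a\<in>A11 G. \<forall>b\<in>A11 G. \<forall>s t. eq_coeffs G'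
        (pull2 G' G phiE (lin1 s a t b)) (lin1 s (pull2 G' G phiE a) t (pull2 G' G phiE b))) \<and>
     \<comment> \<open>unit and products\<close>
     eq_form0 G' (pull0 G' G phiV phiE one0) one0 \<and>
     (\<forall>F\<in>A00 G. \<forall>H\<in>A00 G. eq_form0 G'
        (pull0 G' G phiV phiE (mult00 F H))
        (mult00 (pull0 G' G phiV phiE F) (pull0 G' G phiV phiE H))) \<and>
     (\<forall>F\<in>A00 G. \<forall>a\<in>A10 G. eq_coeffs G'
        (pull1 G' G phiE (mult0 F a)) (mult0 (pull0 G' G phiV phiE F) (pull1 G' G phiE a))) \<and>
     (\<forall>F\<in>A00 G. \<forall>b\<in>A01 G. eq_coeffs G'
        (pull1 G' G phiE (mult0 F b)) (mult0 (pull0 G' G phiV phiE F) (pull1 G' G phiE b))) \<and>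
     (\<forall>F\<in>A00 G. \<forall>c\<in>A11 G. eq_coeffs G'
        (pull2 G' G phiE (mult0 F c)) (mult0 (pull0 G' G phiV phiE F) (pull2 G' G phiE c))) \<and>
     (\<forall>a\<in>A10 G. \<forall>b\<in>A01 G. eq_coeffs G'
        (pull2 G' G phiE (wedge_10_01 a b)) (wedge_10_01 (pull1 G' G phiE a) (pull1 G' G phiE b))) \<and>
     \<comment> \<open>compatibility with d' and d''\<close>
     (\<forall>F\<in>A00 G. eq_coeffs G'
        (pull1 G' G phiE (d'_00 F)) (d'_00 (pull0 G' G phiV phiE F))) \<and>
     (\<forall>F\<in>A00 G. eq_coeffs G'
        (pull1 G' G phiE (d''_00 F)) (d''_00 (pull0 G' G phiV phiE F))) \<and>
     (\<forall>a\<in>A10 G. eq_coeffs G'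
        (pull2 G' G phiE (d''_10 a)) (d''_10 (pull1 G' G phiE a))) \<and>
     (\<forall>b\<in>A01 G. eq_coeffs G'
        (pull2 G' G phiE (d'_01 b)) (d'_01 (pull1 G' G phiE b)))"
proof -
  interpret harmonic_graph_map G G' phiV phiE
    using assms unfolding harmonic_map_def by unfold_locales auto
  show ?thesis
    unfolding pull1_eq_pull_coeffs pull2_eq_pull_coeffs A10_def A01_def d''_00_eq_d'_00
    by (simp add: pull0_A00 pull_coeffs_A1_coeffs pull_coeffs_A11 pull0_d'_00 pull_coeffs_d''_10
        pull_coeffs_d'_01 pull0_lin0 pull_coeffs_lin1 pull0_one0 pull0_mult00
        pull_coeffs_mult0[where phiV = phiV] pull_coeffs_wedge[of 1 1, unfolded one_add_one]
        eq_coeffs_refl eq_form0_refl del: One_nat_def)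
qed

end
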